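(* Let $W$ be an $n\times n$ row-stochastic matrix with node set $V=\{1,\dots,n\}$, and let $M\subseteq V$ be a nonempty cohesive set. Then exactly one of the following holds: (a) $\mathrm{Expansion}(M)=V$; (b) both $\mathrm{Expansion}(M)$ and $V\setminus\mathrm{Expansion}(M)$ are nonempty maximal cohesive sets.
   Context: A matrix $W=(w_{ij})_{n\times n}$ is row-stochastic if $w_{ij}\ge 0$ for all $i,j$ and $\sum_{j=1}^n w_{ij}=1$ for every $i$. A set $M\subseteq V$ is cohesive if $\sum_{j\in M} w_{ij}\ge 1/2$ for every $i\in M$. A cohesive set $M$ is maximal cohesive if there is no $i\in V\setminus M$ with $\sum_{j\in M} w_{ij}>1/2$. The cohesive expansion of $M\subseteq V$ is produced by the following procedure. Set $M_0=M$. For $k=0,1,2,\dots$: if there exists $i\in V\setminus M_k$ with $\sum_{j\in M_k} w_{ij}>1/2$, choose any such $i$ and set $M_{k+1}=M_k\cup\{i\}$. If no such $i$ exists, stop and output $M_k$. The output is denoted $\mathrm{Expansion}(M)$. It does not depend on the choices made. *)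

theory Defs
  imports Complex_Main
begin

definition row_stochastic :: "(nat \<Rightarrow> nat \<Rightarrow> real) \<Rightarrow> nat \<Rightarrow> bool" where
  "row_stochastic W n \<longleftrightarrow>
     (\<forall>i\<in>{1..n}. \<forall>j\<in>{1..n}. W i j \<ge> 0) \<and> (\<forall>i\<in>{1..n}. (\<Sum>j\<in>{1..n}. W i j) = 1)"

definition cohesive :: "(nat \<Rightarrow> nat \<Rightarrow> real) \<Rightarrow> nat \<Rightarrow> nat set \<Rightarrow> bool" where
  "cohesive W n M \<longleftrightarrow> M \<subseteq> {1..n} \<and> (\<forall>i\<in>M. (\<Sum>j\<in>M. W i j) \<ge> 1/2)"

definition maximal_cohesive :: "(nat \<Rightarrow> nat \<Rightarrow> real) \<Rightarrow> nat \<Rightarrow> nat set \<Rightarrow> bool" where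
  "maximal_cohesive W n M \<longleftrightarrow>
     cohesive W n M \<and> \<not> (\<exists>i\<in>{1..n} - M. (\<Sum>j\<in>M. W i j) > 1/2)"

definition exp_step :: "(nat \<Rightarrow> nat \<Rightarrow> real) \<Rightarrow> nat \<Rightarrow> nat set \<Rightarrow> nat set \<Rightarrow> bool" where
  "exp_step W n A B \<longleftrightarrow> (\<exists>i\<in>{1..n} - A. (\<Sum>j\<in>A. W i j) > 1/2 \<and> B = insert i A)"

definition exp_stopped :: "(nat \<Rightarrow> nat \<Rightarrow> real) \<Rightarrow> nat \<Rightarrow> nat set \<Rightarrow> bool" where
  "exp_stopped W n A \<longleftrightarrow> \<not> (\<exists>i\<in>{1..n} - A. (\<Sum>j\<in>A. W i j) > 1/2)"

text \<open>Expansion(M): the output of the procedure (a set reachable from M by steps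
  at which the procedure stops); the paper asserts this does not depend on choices.\<close>
definition Expansion :: "(nat \<Rightarrow> nat \<Rightarrow> real) \<Rightarrow> nat \<Rightarrow> nat set \<Rightarrow> nat set" where
  "Expansion W n M = (THE E. (exp_step W n)\<^sup>*\<^sup>* M E \<and> exp_stopped W n E)"

end

theory Submission
  imports Defs
begin

text \<open>Every step adds a node that sends more than half of its weight into the current set, and
  such a node would also be added to any stopped superset; hence the procedure never leaves a
  stopped superset of its start, which makes its output unique. Steps preserve cohesiveness, so
  \<open>E = Expansion(M)\<close> is cohesive and, being stopped, maximal. Since rows sum to one, a node
  outside \<open>E\<close> sends at least half of its weight to the complement \<open>V - E\<close> and a node of \<open>E\<close> at most
  half, so \<open>V - E\<close> is maximal cohesive as well.\<close>

lemma row_sum_mono: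
  assumes "row_stochastic W n" "i \<in> {1..n}" "A \<subseteq> B" "B \<subseteq> {1..n}"
  shows "(\<Sum>j\<in>A. W i j) \<le> (\<Sum>j\<in>B. W i j)"
proof (rule sum_mono2)
  show "finite B" using assms(4) finite_subset by blast
  show "\<And>b. b \<in> B - A \<Longrightarrow> 0 \<le> W i b" using assms unfolding row_stochastic_def by blast
qed (use assms(3) in blast)

lemma row_sum_complement:
  assumes "row_stochastic W n" "i \<in> {1..n}" "E \<subseteq> {1..n}"
  shows "(\<Sum>j\<in>{1..n} - E. W i j) = 1 - (\<Sum>j\<in>E. W i j)"
  using sum.subset_diff[OF assms(3), of "W i"] assms(1,2) unfolding row_stochastic_def by simp

lemma exp_step_rtranclp_mono:
  assumes "(exp_step W n)\<^sup>*\<^sup>* A E"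
  shows "A \<subseteq> E"
  using assms by (induction rule: rtranclp_induct) (auto simp: exp_step_def)

lemma exp_step_rtranclp_subset_nodes:
  assumes "(exp_step W n)\<^sup>*\<^sup>* A E" "A \<subseteq> {1..n}"
  shows "E \<subseteq> {1..n}"
  using assms by (induction rule: rtranclp_induct) (auto simp: exp_step_def)

lemma exp_step_rtranclp_subset_stopped:
  assumes rs: "row_stochastic W n"
    and "(exp_step W n)\<^sup>*\<^sup>* A E" "A \<subseteq> F" "F \<subseteq> {1..n}" "exp_stopped W n F"
  shows "E \<subseteq> F"
  using assms(2,3)
proof (induction rule: rtranclp_induct)
  case (step y z)
  then have yF: "y \<subseteq> F" by simp
  from step(2) obtain i where i: "i \<in> {1..n} - y" "(\<Sum>j\<in>y. W i j) > 1/2" "z = insert i y"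
    unfolding exp_step_def by blast
  have "(\<Sum>j\<in>y. W i j) \<le> (\<Sum>j\<in>F. W i j)"
    using row_sum_mono[OF rs _ yF assms(4)] i by blast
  with i assms(5) have "i \<in> F" unfolding exp_stopped_def by force
  with yF i show ?case by simp
qed simp

lemma exp_stopped_reachable:
  assumes "A \<subseteq> {1..n}"
  shows "\<exists>E. (exp_step W n)\<^sup>*\<^sup>* A E \<and> exp_stopped W n E"
  using assms
proof (induction "card ({1..n} - A)" arbitrary: A rule: less_induct)
  case less
  show ?case
  proof (cases "exp_stopped W n A")
    case False
    then obtain i where i: "i \<in> {1..n} - A" "(\<Sum>j\<in>A. W i j) > 1/2"
      unfolding exp_stopped_def by blast
    have step: "exp_step W n A (insert i A)" using i unfolding exp_step_def by blast
    have "card ({1..n} - insert i A) < card ({1..n} - A)"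
      by (rule psubset_card_mono) (use i in blast)+
    moreover have "insert i A \<subseteq> {1..n}" using i less.prems by auto
    ultimately obtain E where "(exp_step W n)\<^sup>*\<^sup>* (insert i A) E \<and> exp_stopped W n E"
      using less.hyps by blast
    then show ?thesis using step by (meson converse_rtranclp_into_rtranclp)
  qed blast
qed

lemma Expansion_eqI:
  assumes rs: "row_stochastic W n" and A: "A \<subseteq> {1..n}"
    and E: "(exp_step W n)\<^sup>*\<^sup>* A E" "exp_stopped W n E"
  shows "Expansion W n A = E"
  unfolding Expansion_def
proof (rule the_equality)
  show "(exp_step W n)\<^sup>*\<^sup>* A E \<and> exp_stopped W n E" using E by blast
  fix E' assume E': "(exp_step W n)\<^sup>*\<^sup>* A E' \<and> exp_stopped W n E'"
  show "E' = E"
    using exp_step_rtranclp_subset_stopped[OF rs conjunct1[OF E'] exp_step_rtranclp_mono[OF E(1)]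
        exp_step_rtranclp_subset_nodes[OF E(1) A] E(2)]
      exp_step_rtranclp_subset_stopped[OF rs E(1) exp_step_rtranclp_mono[OF conjunct1[OF E']]
        exp_step_rtranclp_subset_nodes[OF conjunct1[OF E'] A] conjunct2[OF E']]
    by blast
qed

lemma exp_step_rtranclp_cohesive:
  assumes rs: "row_stochastic W n"
    and "(exp_step W n)\<^sup>*\<^sup>* A E" "cohesive W n A"
  shows "cohesive W n E"
  using assms(2,3)
proof (induction rule: rtranclp_induct)
  case (step y z)
  then have coh: "cohesive W n y" by simp
  from step(2) obtain i where i: "i \<in> {1..n} - y" "(\<Sum>j\<in>y. W i j) > 1/2" "z = insert i y"
    unfolding exp_step_def by blast
  have zsub: "z \<subseteq> {1..n}" using i coh unfolding cohesive_def by auto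
  have "(\<Sum>j\<in>z. W k j) \<ge> 1/2" if k: "k \<in> z" for k
  proof -
    have "(\<Sum>j\<in>y. W k j) \<le> (\<Sum>j\<in>z. W k j)"
      using row_sum_mono[OF rs _ _ zsub] k zsub i by blast
    moreover have "(\<Sum>j\<in>y. W k j) \<ge> 1/2"
      using k i coh unfolding cohesive_def by fastforce
    ultimately show ?thesis by linarith
  qed
  with zsub show ?case unfolding cohesive_def by simp
qed simp

lemma maximal_cohesive_if_stopped:
  assumes "cohesive W n E" "exp_stopped W n E"
  shows "maximal_cohesive W n E"
  using assms unfolding maximal_cohesive_def exp_stopped_def by blast

lemma maximal_cohesive_complement:
  assumes rs: "row_stochastic W n" and coh: "cohesive W n E" and stop: "exp_stopped W n E"
  shows "maximal_cohesive W n ({1..n} - E)"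
proof -
  have E: "E \<subseteq> {1..n}" using coh unfolding cohesive_def by blast
  have "(\<Sum>j\<in>{1..n} - E. W i j) \<ge> 1/2" if "i \<in> {1..n} - E" for i
    using that stop row_sum_complement[OF rs _ E, of i] unfolding exp_stopped_def by force
  moreover have "\<not> (\<Sum>j\<in>{1..n} - E. W i j) > 1/2" if "i \<in> E" for i
    using that E coh row_sum_complement[OF rs _ E, of i] unfolding cohesive_def by force
  ultimately show ?thesis
    unfolding maximal_cohesive_def cohesive_def by (simp add: Diff_Diff_Int inf_absorb2[OF E])
qed

theorem lemmaA1:
  fixes W :: "nat \<Rightarrow> nat \<Rightarrow> real" and n :: nat and M :: "nat set"
  assumes "row_stochastic W n"
    and "M \<subseteq> {1..n}" and "M \<noteq> {}"
    and "cohesive W n M"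
  shows "(Expansion W n M = {1..n}
           \<or> (Expansion W n M \<noteq> {} \<and> {1..n} - Expansion W n M \<noteq> {}
              \<and> maximal_cohesive W n (Expansion W n M)
              \<and> maximal_cohesive W n ({1..n} - Expansion W n M)))
      \<and> \<not> (Expansion W n M = {1..n}
           \<and> (Expansion W n M \<noteq> {} \<and> {1..n} - Expansion W n M \<noteq> {}
              \<and> maximal_cohesive W n (Expansion W n M)
              \<and> maximal_cohesive W n ({1..n} - Expansion W n M)))"
proof -
  obtain E where E: "(exp_step W n)\<^sup>*\<^sup>* M E" "exp_stopped W n E"
    using exp_stopped_reachable[OF assms(2)] by blast
  have "Expansion W n M = E" using Expansion_eqI[OF assms(1,2) E] .
  moreover have "E \<noteq> {}" using exp_step_rtranclp_mono[OF E(1)] assms(3) by blast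
  moreover have "E \<subseteq> {1..n}" using exp_step_rtranclp_subset_nodes[OF E(1) assms(2)] .
  moreover have "cohesive W n E" using exp_step_rtranclp_cohesive[OF assms(1) E(1) assms(4)] .
  then have "maximal_cohesive W n E" "maximal_cohesive W n ({1..n} - E)"
    using maximal_cohesive_if_stopped maximal_cohesive_complement[OF assms(1)] E(2) by blast+
  ultimately show ?thesis by blast
qed

end
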